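(* Let $\phi:Z\to[-\infty,+\infty]$ be proper and closed and suppose Assumptions (A1) and (A2) hold for some $\lambda\in\mathbb R$. Then for every $z\in\overline{D\phi}$, $\lim_{\tau\downarrow0}J_\tau z=z$. In particular $\overline{D\phi}=\overline{D(|\partial\phi|)}$.
   Context: $(X,\mathsf d_X)$, $(Y,\mathsf d_Y)$ complete metric spaces; $Z=X\times Y$ with $\mathsf d_Z=(\mathsf d_X^2+\mathsf d_Y^2)^{1/2}$. $D_X\phi=\{x:\phi(x,y)<+\infty\ \forall y\}$, $D_Y\phi=\{y:\phi(x,y)>-\infty\ \forall x\}$, $D\phi=D_X\phi\times D_Y\phi$; proper: $D\phi\ne\emptyset$; closed: for $x\in D_X\phi$, $y\mapsto\phi(x,y)$ upper semicontinuous, for $y\in D_Y\phi$, $x\mapsto\phi(x,y)$ lower semicontinuous. (A1): $\phi=+\infty$ on $(X\setminus D_X\phi)\times D_Y\phi$, $\phi=-\infty$ on $D_X\phi\times(Y\setminus D_Y\phi)$. $\lambda^-=\max\{-\lambda,0\}$, $1/\lambda^-:=+\infty$ if $\lambda^-=0$. $\Phi_\tau(x,y;x',y')=\phi(x',y')+\frac1{2\tau}(\mathsf d_X^2(x',x)-\mathsf d_Y^2(y',y))$. $f$ on $Z$ is $\mu$-convex-concave along curves $\gamma,\sigma$ if for all $t\in[0,1]$: $f(\gamma_t,y)\le(1-t)f(\gamma_0,y)+tf(\gamma_1,y)-\frac\mu2t(1-t)\mathsf d_X^2(\gamma_0,\gamma_1)$ for all $y$ and $f(x,\sigma_t)\ge(1-t)f(x,\sigma_0)+tf(x,\sigma_1)+\frac\mu2t(1-t)\mathsf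 d_Y^2(\sigma_0,\sigma_1)$ for all $x$. (A2) for $\lambda$: for every $(x,y)\in Z$, $(x_0,y_0),(x_1,y_1)\in D\phi$ there are continuous curves $\gamma$ from $x_0$ to $x_1$, $\sigma$ from $y_0$ to $y_1$ such that for all $\tau\in(0,1/\lambda^-)$, $(x',y')\mapsto\Phi_\tau(x,y;x',y')$ is $(\tau^{-1}+\lambda)$-convex-concave along them. For $\tau\in(0,1/\lambda^-)$, $J_\tau z$ is the (unique, existing) saddle point of $z'\mapsto\Phi_\tau(z;z')$. Slope: for $z=(x,y)\in D\phi$ not isolated, $|\partial\phi|(z)=\limsup_{D\phi\ni z'=(x',y')\to z}\frac{\max\{\phi(x,y')-\phi(x',y),0\}}{\mathsf d_Z(z',z)}$; $0$ at isolated points of $D\phi$; $+\infty$ off $D\phi$. $D(|\partial\phi|)=\{z\in D\phi:|\partial\phi|(z)<+\infty\}$. *)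

theory Defs
  imports "HOL-Analysis.Analysis"
begin

text \<open>Z = X x Y carries the product metric dist (x,y) (x',y') = sqrt (dX^2 + dY^2)
  (this is Isabelle's standard metric on product types, see dist_Pair_Pair).\<close>

definition lsc :: "('a::topological_space \<Rightarrow> ereal) \<Rightarrow> bool" where
  "lsc f \<longleftrightarrow> (\<forall>x. f x \<le> Liminf (at x) f)"

definition usc :: "('a::topological_space \<Rightarrow> ereal) \<Rightarrow> bool" where
  "usc f \<longleftrightarrow> (\<forall>x. Limsup (at x) f \<le> f x)"

definition DX :: "('a \<times> 'b \<Rightarrow> ereal) \<Rightarrow> 'a set" where
  "DX \<phi> = {x. \<forall>y. \<phi> (x, y) < \<infinity>}"

definition DY :: "('a \<times> 'b \<Rightarrow> ereal) \<Rightarrow> 'b set" where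
  "DY \<phi> = {y. \<forall>x. \<phi> (x, y) > -\<infinity>}"

definition Dom :: "('a \<times> 'b \<Rightarrow> ereal) \<Rightarrow> ('a \<times> 'b) set" where
  "Dom \<phi> = DX \<phi> \<times> DY \<phi>"

definition proper_sp :: "('a \<times> 'b \<Rightarrow> ereal) \<Rightarrow> bool" where
  "proper_sp \<phi> \<longleftrightarrow> Dom \<phi> \<noteq> {}"

definition closed_sp :: "('a::topological_space \<times> 'b::topological_space \<Rightarrow> ereal) \<Rightarrow> bool" where
  "closed_sp \<phi> \<longleftrightarrow> (\<forall>x\<in>DX \<phi>. usc (\<lambda>y. \<phi> (x, y))) \<and> (\<forall>y\<in>DY \<phi>. lsc (\<lambda>x. \<phi> (x, y)))"

definition A1 :: "('a \<times> 'b \<Rightarrow> ereal) \<Rightarrow> bool" where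
  "A1 \<phi> \<longleftrightarrow> (\<forall>x y. x \<notin> DX \<phi> \<and> y \<in> DY \<phi> \<longrightarrow> \<phi> (x, y) = \<infinity>)
              \<and> (\<forall>x y. x \<in> DX \<phi> \<and> y \<notin> DY \<phi> \<longrightarrow> \<phi> (x, y) = -\<infinity>)"

text \<open>lambda^- = max (-lambda) 0; the admissible step sizes are tau in (0, 1/lambda^-),
  with 1/lambda^- = +infinity when lambda^- = 0.\<close>
definition neg_part :: "real \<Rightarrow> real" where
  "neg_part l = max (- l) 0"

definition adm_tau :: "real \<Rightarrow> real set" where
  "adm_tau l = {\<tau>. 0 < \<tau> \<and> (neg_part l = 0 \<or> \<tau> < 1 / neg_part l)}"

definition Phi :: "('a::metric_space \<times> 'b::metric_space \<Rightarrow> ereal) \<Rightarrow> real \<Rightarrow> 'a \<times> 'b \<Rightarrow> 'a \<times> 'b \<Rightarrow> ereal" where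
  "Phi \<phi> \<tau> z z' = \<phi> z' + ereal ((dist (fst z') (fst z))\<^sup>2 / (2 * \<tau>) - (dist (snd z') (snd z))\<^sup>2 / (2 * \<tau>))"

definition convex_concave_along ::
  "('a::metric_space \<times> 'b::metric_space \<Rightarrow> ereal) \<Rightarrow> real \<Rightarrow> (real \<Rightarrow> 'a) \<Rightarrow> (real \<Rightarrow> 'b) \<Rightarrow> bool" where
  "convex_concave_along f \<mu> \<gamma> \<sigma> \<longleftrightarrow>
     (\<forall>t\<in>{0..1}.
        (\<forall>y. f (\<gamma> t, y) \<le> ereal (1 - t) * f (\<gamma> 0, y) + ereal t * f (\<gamma> 1, y)
                 - ereal (\<mu> / 2 * t * (1 - t) * (dist (\<gamma> 0) (\<gamma> 1))\<^sup>2)) \<and>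
        (\<forall>x. f (x, \<sigma> t) \<ge> ereal (1 - t) * f (x, \<sigma> 0) + ereal t * f (x, \<sigma> 1)
                 + ereal (\<mu> / 2 * t * (1 - t) * (dist (\<sigma> 0) (\<sigma> 1))\<^sup>2)))"

definition A2 :: "('a::metric_space \<times> 'b::metric_space \<Rightarrow> ereal) \<Rightarrow> real \<Rightarrow> bool" where
  "A2 \<phi> l \<longleftrightarrow> (\<forall>z x0 y0 x1 y1. (x0, y0) \<in> Dom \<phi> \<longrightarrow> (x1, y1) \<in> Dom \<phi> \<longrightarrow>
      (\<exists>\<gamma> \<sigma>. continuous_on {0..1} \<gamma> \<and> \<gamma> 0 = x0 \<and> \<gamma> 1 = x1 \<and>
              continuous_on {0..1} \<sigma> \<and> \<sigma> 0 = y0 \<and> \<sigma> 1 = y1 \<and>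
              (\<forall>\<tau>\<in>adm_tau l. convex_concave_along (Phi \<phi> \<tau> z) (1 / \<tau> + l) \<gamma> \<sigma>)))"

definition is_saddle :: "('a \<times> 'b \<Rightarrow> ereal) \<Rightarrow> 'a \<times> 'b \<Rightarrow> bool" where
  "is_saddle f p \<longleftrightarrow> (\<forall>x' y'. f (fst p, y') \<le> f p \<and> f p \<le> f (x', snd p))"

definition J :: "('a::metric_space \<times> 'b::metric_space \<Rightarrow> ereal) \<Rightarrow> real \<Rightarrow> 'a \<times> 'b \<Rightarrow> 'a \<times> 'b" where
  "J \<phi> \<tau> z = (THE p. is_saddle (Phi \<phi> \<tau> z) p)"

definition slope :: "('a::metric_space \<times> 'b::metric_space \<Rightarrow> ereal) \<Rightarrow> 'a \<times> 'b \<Rightarrow> ereal" where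
  "slope \<phi> z =
    (if z \<notin> Dom \<phi> then \<infinity>
     else if at z within Dom \<phi> = bot then 0
     else Limsup (at z within Dom \<phi>)
       (\<lambda>z'. max (\<phi> (fst z, snd z') - \<phi> (fst z', snd z)) 0 / ereal (dist z' z)))"

definition Dom_slope :: "('a::metric_space \<times> 'b::metric_space \<Rightarrow> ereal) \<Rightarrow> ('a \<times> 'b) set" where
  "Dom_slope \<phi> = {z \<in> Dom \<phi>. slope \<phi> z < \<infinity>}"

end

theory Submission
  imports Defs
begin

text \<open>
  For an admissible step \<open>\<tau>\<close>, (A2) makes \<open>\<Phi>\<^sub>\<tau>(z; \<cdot>)\<close> strongly convex in \<open>x\<close> and strongly
  concave in \<open>y\<close> along curves, with modulus \<open>1/\<tau> + \<lambda> > 0\<close>. Semicontinuity together with convexity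
  along a curve leaving a small ball gives quadratic bounds \<open>\<phi>(x, y) \<ge> c - B d(x, p)\<^sup>2\<close> and
  \<open>\<phi>(x, y) \<le> c + B d(y, p)\<^sup>2\<close>. Once \<open>1/(2\<tau>)\<close> dominates \<open>B\<close>, the value
  \<open>s = sup\<^sub>y inf\<^sub>x \<Phi>\<^sub>\<tau>\<close> is finite, midpoint strong convexity makes near-optimal sequences Cauchy,
  and completeness with semicontinuity produces a saddle point, unique by strong convexity.
  Comparing the saddle inequalities at \<open>J\<^sub>\<tau> z\<close> with a point \<open>p \<in> D\<phi>\<close> gives
  \<open>d(J\<^sub>\<tau> z, z)\<^sup>2 \<le> 2 d(p, z)\<^sup>2 + C\<tau>\<close>, hence \<open>J\<^sub>\<tau> z \<rightarrow> z\<close> on the closure of \<open>D\<phi>\<close>; the same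
  inequalities bound the difference quotients defining \<open>|\<partial>\<phi>|\<close> at \<open>J\<^sub>\<tau> z\<close>.
  Every statement about the concave variable is the convex one for the dual function
  \<open>(y, x) \<mapsto> -\<phi>(x, y)\<close>, which satisfies the same hypotheses.
\<close>

lemma le_of_le_add_scaled:
  fixes a b K :: real
  assumes "\<And>t. 0 < t \<Longrightarrow> t \<le> 1 \<Longrightarrow> a \<le> b + t * K"
  shows "a \<le> b"
proof (rule field_le_epsilon)
  fix e :: real assume "0 < e"
  define t where "t = min 1 (e / (\<bar>K\<bar> + 1))"
  have t: "0 < t" "t \<le> 1" using \<open>0 < e\<close> by (auto simp: t_def)
  have "t * K \<le> t * (\<bar>K\<bar> + 1)" using t by (intro mult_left_mono) auto
  also have "\<dots> \<le> e / (\<bar>K\<bar> + 1) * (\<bar>K\<bar> + 1)"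
    by (intro mult_right_mono) (auto simp: t_def)
  finally show "a \<le> b + e" using assms[OF t] by simp
qed

lemma le_of_le_convex_comb:
  fixes a b m D t :: real
  assumes "0 < t" and "a \<le> (1 - t) * a + t * b - m * t * (1 - t) * D"
  shows "a + m * D \<le> b + t * (m * D)"
proof -
  have "t * (a + m * D) \<le> t * (b + t * (m * D))" using assms(2) by (simp add: algebra_simps)
  then show ?thesis using assms(1) by simp
qed

lemma concave_step_bound:
  fixes a b w s t m D c B :: real
  assumes t: "0 < t" "t \<le> 1" "t \<le> m / (2 * (m + B))" and D: "0 \<le> D" and m: "0 < m" and B: "0 \<le> B"
    and concave: "(1 - t) * a + t * b \<le> w" and near: "w < s + t\<^sup>2"
    and growth: "s + m * D \<le> a" and lower: "c - B * D \<le> b"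
  shows "b < s + t" and "m / 2 * D \<le> t * (\<bar>s - c\<bar> + 1)"
proof -
  have "(1 - t) * (s + m * D) \<le> (1 - t) * a" using growth t by (intro mult_left_mono) auto
  with concave near have step: "(1 - t) * (s + m * D) + t * b < s + t\<^sup>2" by linarith
  have "0 \<le> (1 - t) * (m * D)" using t D m by simp
  with step have "t * b < t * (s + t)" by (simp add: algebra_simps power2_eq_square)
  then show "b < s + t" using t(1) by simp
  have "t * (m + B) \<le> m / 2" using t(3) m B by (simp add: field_simps)
  then have "m / 2 * D \<le> ((1 - t) * m - t * B) * D" using D by (intro mult_right_mono) (auto simp: algebra_simps)
  also have "t * (c - B * D) \<le> t * b" using lower t by (intro mult_left_mono) auto
  then have "((1 - t) * m - t * B) * D < t * (s - c + t)"
    using step by (simp add: algebra_simps power2_eq_square)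
  also have "\<dots> \<le> t * (\<bar>s - c\<bar> + 1)" using t by (intro mult_left_mono) auto
  finally show "m / 2 * D \<le> t * (\<bar>s - c\<bar> + 1)" by simp
qed

lemma quadratic_gap_bound:
  fixes D R G C \<tau> :: real
  assumes \<tau>: "0 < \<tau>" and "D / (2 * \<tau>) \<le> G + R / (2 * \<tau>)" and "G \<le> C + D / (4 * \<tau>)"
  shows "D \<le> 2 * R + \<tau> * (4 * \<bar>C\<bar>)"
proof -
  have "D / (2 * \<tau>) = 2 * (D / (4 * \<tau>))" by simp
  with assms(2,3) have "D / (4 * \<tau>) \<le> C + R / (2 * \<tau>)" by linarith
  then have "D \<le> (C + R / (2 * \<tau>)) * (4 * \<tau>)" using \<tau> by (simp add: pos_divide_le_eq)
  also have "\<dots> = 2 * R + \<tau> * (4 * C)" using \<tau> by (simp add: field_simps)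
  also have "\<dots> \<le> 2 * R + \<tau> * (4 * \<bar>C\<bar>)" using \<tau> by (intro add_left_mono mult_left_mono) auto
  finally show ?thesis .
qed

lemma increment_bound:
  fixes u e1 e2 d1 d2 A1 A2 \<delta> \<tau> :: real
  assumes "u \<le> (e1 + e2) / (2 * \<tau>)" "e1 \<le> d1 * (2 * A1 + d1)" "e2 \<le> d2 * (2 * A2 + d2)"
    "0 \<le> d1" "d1 \<le> \<delta>" "0 \<le> d2" "d2 \<le> \<delta>" "\<delta> \<le> 1" "0 \<le> A1" "0 \<le> A2" "0 < \<tau>"
  shows "u \<le> \<delta> * ((2 * A1 + 2 * A2 + 2) / (2 * \<tau>))"
proof -
  have "d1 * (2 * A1 + d1) \<le> \<delta> * (2 * A1 + 1)" "d2 * (2 * A2 + d2) \<le> \<delta> * (2 * A2 + 1)"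
    using assms by (auto intro!: mult_mono)
  then have "e1 + e2 \<le> \<delta> * (2 * A1 + 2 * A2 + 2)" using assms(2,3) by (simp add: algebra_simps)
  then have "(e1 + e2) / (2 * \<tau>) \<le> \<delta> * (2 * A1 + 2 * A2 + 2) / (2 * \<tau>)"
    using assms(11) by (simp add: divide_right_mono)
  then show ?thesis using assms(1) by simp
qed

lemma sup_inf_value:
  fixes g :: "'a \<Rightarrow> 'b \<Rightarrow> real"
  assumes x0: "x0 \<in> A" and y0: "y0 \<in> B"
    and lower: "\<And>x. x \<in> A \<Longrightarrow> m \<le> g x y0" and upper: "\<And>y. y \<in> B \<Longrightarrow> g x0 y \<le> M"
  obtains s where "\<And>y \<delta>. y \<in> B \<Longrightarrow> 0 < \<delta> \<Longrightarrow> \<exists>x\<in>A. g x y < s + \<delta>"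
    and "\<And>\<epsilon>. 0 < \<epsilon> \<Longrightarrow> \<exists>y\<in>B. \<forall>x\<in>A. s - \<epsilon> < g x y"
proof -
  define S where "S = (SUP y\<in>B. INF x\<in>A. ereal (g x y))"
  have "S \<le> ereal M" unfolding S_def
    by (rule SUP_least, rule INF_lower2[OF x0]) (simp add: upper)
  moreover have "ereal m \<le> S" unfolding S_def
    by (rule SUP_upper2[OF y0], rule INF_greatest) (simp add: lower)
  ultimately obtain s where S: "S = ereal s" by (cases S) auto
  show thesis
  proof (rule that[of s])
    fix y \<delta> assume "y \<in> B" "0 < (\<delta>::real)"
    from \<open>y \<in> B\<close> have "(INF x\<in>A. ereal (g x y)) \<le> S" unfolding S_def by (rule SUP_upper)
    also have "S < ereal (s + \<delta>)" using S \<open>0 < \<delta>\<close> by simp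
    finally have "(INF x\<in>A. ereal (g x y)) < ereal (s + \<delta>)" .
    then show "\<exists>x\<in>A. g x y < s + \<delta>" by (auto simp: INF_less_iff)
  next
    fix \<epsilon> :: real assume "0 < \<epsilon>"
    then have "ereal (s - \<epsilon>) < S" using S by simp
    then obtain y where y: "y \<in> B" and lt: "ereal (s - \<epsilon>) < (INF x\<in>A. ereal (g x y))"
      unfolding S_def less_SUP_iff by blast
    have "s - \<epsilon> < g x y" if "x \<in> A" for x
      using less_le_trans[OF lt INF_lower[OF that]] by simp
    with y show "\<exists>y\<in>B. \<forall>x\<in>A. s - \<epsilon> < g x y" by blast
  qed
qed

lemma null_sequence_below:
  fixes t0 :: real
  assumes "0 < t0"
  obtains T :: "nat \<Rightarrow> real" where "\<And>n. 0 < T n" "\<And>n. T n \<le> t0" "T \<longlonglongrightarrow> 0"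
proof
  show "0 < t0 * inverse (real (Suc n))" for n using assms by simp
  show "t0 * inverse (real (Suc n)) \<le> t0" for n
    using assms mult_left_mono[of "inverse (real (Suc n))" 1 t0] by (simp add: inverse_le_1_iff)
  show "(\<lambda>n. t0 * inverse (real (Suc n))) \<longlonglongrightarrow> 0"
    by (rule tendsto_mult_right_zero[OF LIMSEQ_inverse_real_of_nat])
qed

lemma power2_dist_triangle:
  fixes a b c :: "'a::metric_space"
  shows "(dist a c)\<^sup>2 \<le> 2 * (dist a b)\<^sup>2 + 2 * (dist b c)\<^sup>2"
proof -
  have "(dist a c)\<^sup>2 \<le> (dist a b + dist b c)\<^sup>2"
    by (simp add: dist_triangle power_mono)
  also have "\<dots> \<le> 2 * (dist a b)\<^sup>2 + 2 * (dist b c)\<^sup>2"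
    using zero_le_power2[of "dist a b - dist b c"] unfolding power2_sum power2_diff by linarith
  finally show ?thesis .
qed

lemma power2_dist_diff_le:
  fixes u v w :: "'a::metric_space"
  shows "(dist u w)\<^sup>2 - (dist v w)\<^sup>2 \<le> dist u v * (2 * dist v w + dist u v)"
proof -
  have "(dist u w)\<^sup>2 \<le> (dist u v + dist v w)\<^sup>2"
    by (simp add: dist_triangle power_mono)
  thus ?thesis by (simp add: power2_eq_square algebra_simps)
qed

lemma Cauchy_of_power2_dist_le:
  fixes X :: "nat \<Rightarrow> 'a::metric_space"
  assumes "\<And>m n. (dist (X m) (X n))\<^sup>2 \<le> e m + e n" and "e \<longlonglongrightarrow> 0"
  shows "Cauchy X"
proof (rule metric_CauchyI)
  fix r :: real assume "0 < r"
  then have "0 < r\<^sup>2 / 2" by simp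
  from order_tendstoD(2)[OF assms(2) this] obtain M where M: "\<And>n. M \<le> n \<Longrightarrow> e n < r\<^sup>2 / 2"
    unfolding eventually_sequentially by blast
  have "dist (X m) (X n) < r" if "M \<le> m" "M \<le> n" for m n
  proof -
    have "e m < r\<^sup>2 / 2" "e n < r\<^sup>2 / 2" using M that by auto
    then have "(dist (X m) (X n))\<^sup>2 < r\<^sup>2" using assms(1)[of m n] by linarith
    thus ?thesis using \<open>0 < r\<close> by (simp add: power_less_imp_less_base)
  qed
  thus "\<exists>M. \<forall>m\<ge>M. \<forall>n\<ge>M. dist (X m) (X n) < r" by blast
qed

lemma LIMSEQ_of_power2_dist_le:
  fixes X :: "nat \<Rightarrow> 'a::metric_space"
  assumes "\<And>n. (dist (X n) x)\<^sup>2 \<le> e n" and "e \<longlonglongrightarrow> 0"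
  shows "X \<longlonglongrightarrow> x"
proof -
  have "(\<lambda>n. sqrt (e n)) \<longlonglongrightarrow> 0" using tendsto_real_sqrt[OF assms(2)] by simp
  moreover have "dist (X n) x \<le> sqrt (e n)" for n
    using real_sqrt_le_mono[OF assms(1)[of n]] by simp
  ultimately have "(\<lambda>n. dist (X n) x) \<longlonglongrightarrow> 0"
    using tendsto_sandwich[of "\<lambda>_. 0" "\<lambda>n. dist (X n) x" sequentially "\<lambda>n. sqrt (e n)" 0]
    by simp
  thus ?thesis by (rule tendsto_dist_iff[THEN iffD2])
qed

lemma curve_crosses_sphere:
  fixes \<gamma> :: "real \<Rightarrow> 'a::metric_space"
  assumes "continuous_on {0..1} \<gamma>" and "\<gamma> 0 = a" and "r \<le> dist (\<gamma> 1) a" and "0 < r"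
  obtains t where "0 < t" "t \<le> 1" "dist (\<gamma> t) a = r"
proof -
  have "continuous_on {0..1} (\<lambda>t. dist (\<gamma> t) a)"
    by (intro continuous_on_dist assms(1) continuous_on_const)
  with assms obtain t where t: "0 \<le> t" "t \<le> 1" "dist (\<gamma> t) a = r"
    using IVT'[of "\<lambda>t. dist (\<gamma> t) a" 0 r 1] by auto
  moreover have "t \<noteq> 0" using t assms by auto
  ultimately show thesis using that[of t] by simp
qed

lemma closure_eq_closure_if_approximable:
  fixes D S :: "'a::topological_space set"
  assumes "S \<subseteq> D" and "F \<noteq> bot"
    and lim: "\<And>z. z \<in> D \<Longrightarrow> (g z \<longlongrightarrow> z) F" and ev: "\<And>z. z \<in> D \<Longrightarrow> eventually (\<lambda>t. g z t \<in> S) F"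
  shows "closure D = closure S"
proof
  show "closure D \<subseteq> closure S"
  proof (rule closure_minimal[OF _ closed_closure], rule subsetI)
    fix z assume "z \<in> D"
    from ev[OF this] have "eventually (\<lambda>t. g z t \<in> closure S) F"
      by eventually_elim (use closure_subset in blast)
    then show "z \<in> closure S"
      by (rule Lim_in_closed_set[OF closed_closure _ \<open>F \<noteq> bot\<close> lim[OF \<open>z \<in> D\<close>]])
  qed
  show "closure S \<subseteq> closure D" using assms(1) by (rule closure_mono)
qed

section \<open>Semicontinuity\<close>

lemma lsc_eventually_greater:
  assumes "lsc f" and "c < f x"
  shows "eventually (\<lambda>u. c < f u) (nhds x)"
proof -
  have "c < Liminf (at x) f" using assms unfolding lsc_def by (meson order_less_le_trans)
  with assms(2) show ?thesis by (simp add: eventually_nhds_conv_at less_LiminfD)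
qed

lemma lsc_le_of_tendsto:
  fixes f :: "'a::topological_space \<Rightarrow> ereal"
  assumes "lsc f" and "X \<longlonglongrightarrow> x" and "g \<longlonglongrightarrow> L" and "\<And>n. f (X n) \<le> ereal (g n)"
  shows "f x \<le> ereal L"
proof (rule ccontr)
  assume "\<not> f x \<le> ereal L"
  then have "ereal L < f x" by simp
  then obtain c where c: "L < c" "ereal c < f x" using ereal_dense2 by force
  have "eventually (\<lambda>n. c < f (X n)) sequentially"
    using eventually_compose_filterlim[OF lsc_eventually_greater[OF assms(1) c(2)] assms(2)] .
  moreover have "eventually (\<lambda>n. g n < c) sequentially"
    using order_tendstoD(2)[OF assms(3) c(1)] .
  ultimately have "eventually (\<lambda>n. c < f (X n) \<and> g n < c) sequentially"
    by (rule eventually_conj)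
  then obtain n where "c < f (X n)" "g n < c"
    unfolding eventually_sequentially by blast
  with assms(4)[of n] have "ereal c < ereal (g n)" by (meson less_le_trans)
  with \<open>g n < c\<close> show False by simp
qed

lemma usc_iff_lsc_uminus: "usc f \<longleftrightarrow> lsc (\<lambda>x. - f x)"
  unfolding usc_def lsc_def ereal_Liminf_uminus by (simp add: ereal_uminus_le_reorder)

lemma adm_tau_pos: "\<tau> \<in> adm_tau l \<Longrightarrow> 0 < \<tau>"
  by (simp add: adm_tau_def)

lemma adm_tau_modulus_pos:
  assumes "\<tau> \<in> adm_tau l"
  shows "0 < 1 / \<tau> + l"
proof (cases "0 \<le> l")
  case True
  with assms show ?thesis by (simp add: adm_tau_def add_pos_nonneg)
next
  case False
  with assms have "0 < \<tau>" "\<tau> < 1 / (- l)" by (auto simp: adm_tau_def neg_part_def)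
  with False have "- l < 1 / \<tau>" by (simp add: field_simps)
  then show ?thesis by simp
qed

lemma adm_tau_if_small:
  assumes "0 < \<tau>" and "\<tau> < 1 / (\<bar>l\<bar> + 1)"
  shows "\<tau> \<in> adm_tau l"
proof (cases "neg_part l = 0")
  case False
  then have "0 < neg_part l" "neg_part l \<le> \<bar>l\<bar> + 1" by (auto simp: neg_part_def)
  then have "1 / (\<bar>l\<bar> + 1) \<le> 1 / neg_part l" by (intro divide_left_mono) auto
  with assms have "\<tau> < 1 / neg_part l" by linarith
  with assms(1) show ?thesis by (simp add: adm_tau_def)
qed (use assms in \<open>simp add: adm_tau_def\<close>)

lemma adm_tau_below:
  assumes "0 < \<epsilon>"
  obtains \<tau> where "\<tau> \<in> adm_tau l" "0 < \<tau>" "\<tau> \<le> \<epsilon>"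
proof
  define \<tau> where "\<tau> = min \<epsilon> (1 / (2 * (\<bar>l\<bar> + 1)))"
  show "0 < \<tau>" "\<tau> \<le> \<epsilon>" using assms by (simp_all add: \<tau>_def)
  have "\<tau> \<le> 1 / (2 * (\<bar>l\<bar> + 1))" by (simp add: \<tau>_def)
  also have "\<dots> < 1 / (\<bar>l\<bar> + 1)" by (simp add: field_simps)
  finally show "\<tau> \<in> adm_tau l" using \<open>0 < \<tau>\<close> by (rule adm_tau_if_small[rotated])
qed

lemma eventually_adm_tau_at_right:
  assumes "0 < \<tau>0"
  shows "eventually (\<lambda>\<tau>. \<tau> \<in> adm_tau l \<and> \<tau> < \<tau>0) (at_right 0)"
  unfolding eventually_at_right_field
  using assms adm_tau_if_small by (intro exI[of _ "min \<tau>0 (1 / (\<bar>l\<bar> + 1))"]) auto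

section \<open>The dual saddle function\<close>

lemma ereal_uminus_add_add:
  fixes A B :: ereal
  shows "A \<noteq> -\<infinity> \<Longrightarrow> B \<noteq> -\<infinity> \<Longrightarrow> - (A + B + ereal c) = - A + - B - ereal c"
  by (cases A; cases B) auto

lemma ereal_uminus_add_diff:
  fixes A B :: ereal
  shows "A \<noteq> \<infinity> \<Longrightarrow> B \<noteq> \<infinity> \<Longrightarrow> - (A + B - ereal c) = - A + - B + ereal c"
  by (cases A; cases B) auto

lemma ereal_mult_nonneg_neq_PInf: "0 \<le> p \<Longrightarrow> a \<noteq> \<infinity> \<Longrightarrow> ereal p * a \<noteq> \<infinity>"
  by (cases a) auto

lemma ereal_mult_nonneg_neq_MInf: "0 \<le> p \<Longrightarrow> a \<noteq> -\<infinity> \<Longrightarrow> ereal p * a \<noteq> -\<infinity>"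
  by (cases a) auto

definition swap_neg :: "('a \<times> 'b \<Rightarrow> ereal) \<Rightarrow> 'b \<times> 'a \<Rightarrow> ereal" where
  "swap_neg \<phi> = (\<lambda>(y, x). - \<phi> (x, y))"

lemma DX_swap_neg [simp]: "DX (swap_neg \<phi>) = DY \<phi>"
  by (simp add: DX_def DY_def swap_neg_def ereal_uminus_eq_reorder)

lemma DY_swap_neg [simp]: "DY (swap_neg \<phi>) = DX \<phi>"
  by (simp add: DX_def DY_def swap_neg_def ereal_uminus_eq_reorder)

lemma proper_sp_swap_neg: "proper_sp \<phi> \<Longrightarrow> proper_sp (swap_neg \<phi>)"
  by (simp add: proper_sp_def Dom_def)

lemma closed_sp_swap_neg: "closed_sp \<phi> \<Longrightarrow> closed_sp (swap_neg \<phi>)"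
  unfolding closed_sp_def DX_swap_neg DY_swap_neg by (simp add: swap_neg_def usc_iff_lsc_uminus)

lemma A1_swap_neg: "A1 \<phi> \<Longrightarrow> A1 (swap_neg \<phi>)"
  unfolding A1_def DX_swap_neg DY_swap_neg by (simp add: swap_neg_def ereal_uminus_eq_reorder)

lemma Phi_swap_neg: "Phi (swap_neg \<phi>) \<tau> (y, x) (y', x') = - Phi \<phi> \<tau> (x, y) (x', y')"
  by (cases "\<phi> (x', y')") (simp_all add: Phi_def swap_neg_def)

text \<open>In \<open>ereal\<close>, negation does not distribute over \<open>\<infinity> + -\<infinity>\<close>; the hypotheses on the
  endpoints of the curves exclude that case.\<close>
lemma convex_concave_along_swap_neg:
  assumes cc: "convex_concave_along (Phi \<phi> \<tau> (x, y)) \<mu> \<gamma> \<sigma>"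
    and dom: "\<gamma> 0 \<in> DX \<phi>" "\<gamma> 1 \<in> DX \<phi>" "\<sigma> 0 \<in> DY \<phi>" "\<sigma> 1 \<in> DY \<phi>"
  shows "convex_concave_along (Phi (swap_neg \<phi>) \<tau> (y, x)) \<mu> \<sigma> \<gamma>"
  unfolding convex_concave_along_def Phi_swap_neg
proof (intro ballI allI conjI)
  fix t :: real and x' y' assume t: "t \<in> {0..1}"
  let ?P = "Phi \<phi> \<tau> (x, y)" and ?c = "\<mu> / 2 * t * (1 - t)"
  have fin_x: "?P (\<gamma> i, y') \<noteq> \<infinity>" if "\<gamma> i \<in> DX \<phi>" for i
    using that by (auto simp: Phi_def DX_def)
  have fin_y: "?P (x', \<sigma> i) \<noteq> -\<infinity>" if "\<sigma> i \<in> DY \<phi>" for i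
    using that by (auto simp: Phi_def DY_def)
  let ?A = "ereal (1 - t) * ?P (x', \<sigma> 0)" and ?B = "ereal t * ?P (x', \<sigma> 1)"
    and ?C = "ereal (?c * (dist (\<sigma> 0) (\<sigma> 1))\<^sup>2)"
  have "?A \<noteq> -\<infinity>" "?B \<noteq> -\<infinity>"
    using t fin_y dom by (auto intro!: ereal_mult_nonneg_neq_MInf)
  moreover have "?A + ?B + ?C \<le> ?P (x', \<sigma> t)"
    using cc t unfolding convex_concave_along_def by blast
  ultimately have "- ?P (x', \<sigma> t) \<le> - ?A + - ?B - ?C"
    by (metis ereal_minus_le_minus ereal_uminus_add_add)
  then show "- ?P (x', \<sigma> t) \<le> ereal (1 - t) * - ?P (x', \<sigma> 0) + ereal t * - ?P (x', \<sigma> 1) - ?C"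
    by (simp only: ereal_mult_minus_right)
  let ?A = "ereal (1 - t) * ?P (\<gamma> 0, y')" and ?B = "ereal t * ?P (\<gamma> 1, y')"
    and ?C = "ereal (?c * (dist (\<gamma> 0) (\<gamma> 1))\<^sup>2)"
  have "?A \<noteq> \<infinity>" "?B \<noteq> \<infinity>"
    using t fin_x dom by (auto intro!: ereal_mult_nonneg_neq_PInf)
  moreover have "?P (\<gamma> t, y') \<le> ?A + ?B - ?C"
    using cc t unfolding convex_concave_along_def by blast
  ultimately have "- ?A + - ?B + ?C \<le> - ?P (\<gamma> t, y')"
    by (metis ereal_minus_le_minus ereal_uminus_add_diff)
  then show "ereal (1 - t) * - ?P (\<gamma> 0, y') + ereal t * - ?P (\<gamma> 1, y') + ?C \<le> - ?P (\<gamma> t, y')"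
    by (simp only: ereal_mult_minus_right)
qed

lemma A2_swap_neg: "A2 \<phi> l \<Longrightarrow> A2 (swap_neg \<phi>) l"
  unfolding A2_def
proof (intro allI impI)
  fix z' :: "'b \<times> 'a" and y0 y1 :: 'b and x0 x1 :: 'a
  assume A2: "\<forall>z x0 y0 x1 y1. (x0, y0) \<in> Dom \<phi> \<longrightarrow> (x1, y1) \<in> Dom \<phi> \<longrightarrow> (\<exists>\<gamma> \<sigma>.
      continuous_on {0..1} \<gamma> \<and> \<gamma> 0 = x0 \<and> \<gamma> 1 = x1 \<and> continuous_on {0..1} \<sigma> \<and> \<sigma> 0 = y0 \<and> \<sigma> 1 = y1 \<and>
      (\<forall>\<tau>\<in>adm_tau l. convex_concave_along (Phi \<phi> \<tau> z) (1 / \<tau> + l) \<gamma> \<sigma>))"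
    and d: "(y0, x0) \<in> Dom (swap_neg \<phi>)" "(y1, x1) \<in> Dom (swap_neg \<phi>)"
  obtain y x where z': "z' = (y, x)" by (cases z')
  have "(x0, y0) \<in> Dom \<phi>" "(x1, y1) \<in> Dom \<phi>" using d by (auto simp: Dom_def)
  with A2 obtain \<gamma> \<sigma> where curves: "continuous_on {0..1} \<gamma>" "\<gamma> 0 = x0" "\<gamma> 1 = x1"
      "continuous_on {0..1} \<sigma>" "\<sigma> 0 = y0" "\<sigma> 1 = y1"
    and cc: "\<forall>\<tau>\<in>adm_tau l. convex_concave_along (Phi \<phi> \<tau> (x, y)) (1 / \<tau> + l) \<gamma> \<sigma>" by blast
  have "convex_concave_along (Phi (swap_neg \<phi>) \<tau> z') (1 / \<tau> + l) \<sigma> \<gamma>" if "\<tau> \<in> adm_tau l" for \<tau>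
    unfolding z' using cc that d curves
    by (intro convex_concave_along_swap_neg) (auto simp: Dom_def)
  with curves show "\<exists>\<sigma> \<gamma>. continuous_on {0..1} \<sigma> \<and> \<sigma> 0 = y0 \<and> \<sigma> 1 = y1 \<and>
      continuous_on {0..1} \<gamma> \<and> \<gamma> 0 = x0 \<and> \<gamma> 1 = x1 \<and>
      (\<forall>\<tau>\<in>adm_tau l. convex_concave_along (Phi (swap_neg \<phi>) \<tau> z') (1 / \<tau> + l) \<sigma> \<gamma>)" by blast
qed

section \<open>Saddle functions\<close>

locale saddle_function =
  fixes \<phi> :: "'a::complete_space \<times> 'b::complete_space \<Rightarrow> ereal" and l :: real
  assumes proper: "proper_sp \<phi>" and closed: "closed_sp \<phi>" and A1: "A1 \<phi>" and A2: "A2 \<phi> l"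
begin

lemma saddle_function_swap_neg: "saddle_function (swap_neg \<phi>) l"
  using proper closed A1 A2
  by unfold_locales (simp_all add: proper_sp_swap_neg closed_sp_swap_neg A1_swap_neg A2_swap_neg)

text \<open>Only meaningful on \<open>Dom \<phi>\<close>: \<open>real_of_ereal\<close> sends \<open>\<plusminus>\<infinity>\<close> to \<open>0\<close>.\<close>
definition f :: "'a \<Rightarrow> 'b \<Rightarrow> real" where
  "f x y = real_of_ereal (\<phi> (x, y))"

definition F :: "real \<Rightarrow> 'a \<times> 'b \<Rightarrow> 'a \<Rightarrow> 'b \<Rightarrow> real" where
  "F \<tau> z x y = f x y + (dist x (fst z))\<^sup>2 / (2 * \<tau>) - (dist y (snd z))\<^sup>2 / (2 * \<tau>)"

lemma f_swap_neg: "saddle_function.f (swap_neg \<phi>) y x = - f x y"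
  unfolding saddle_function.f_def[OF saddle_function_swap_neg] by (simp add: f_def swap_neg_def)

lemma F_swap_neg: "saddle_function.F (swap_neg \<phi>) \<tau> (prod.swap z) y x = - F \<tau> z x y"
  unfolding saddle_function.F_def[OF saddle_function_swap_neg] f_swap_neg by (simp add: F_def)

lemma phi_eq_f: "x \<in> DX \<phi> \<Longrightarrow> y \<in> DY \<phi> \<Longrightarrow> \<phi> (x, y) = ereal (f x y)"
  unfolding DX_def DY_def f_def by (cases "\<phi> (x, y)") auto

lemma phi_PInf: "x \<notin> DX \<phi> \<Longrightarrow> y \<in> DY \<phi> \<Longrightarrow> \<phi> (x, y) = \<infinity>"
  using A1 unfolding A1_def by blast

lemma phi_MInf: "x \<in> DX \<phi> \<Longrightarrow> y \<notin> DY \<phi> \<Longrightarrow> \<phi> (x, y) = -\<infinity>"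
  using A1 unfolding A1_def by blast

lemma Phi_eq_F: "x \<in> DX \<phi> \<Longrightarrow> y \<in> DY \<phi> \<Longrightarrow> Phi \<phi> \<tau> z (x, y) = ereal (F \<tau> z x y)"
  by (simp add: Phi_def phi_eq_f F_def)

lemma Phi_PInf: "x \<notin> DX \<phi> \<Longrightarrow> y \<in> DY \<phi> \<Longrightarrow> Phi \<phi> \<tau> z (x, y) = \<infinity>"
  by (simp add: Phi_def phi_PInf)

lemma Phi_MInf: "x \<in> DX \<phi> \<Longrightarrow> y \<notin> DY \<phi> \<Longrightarrow> Phi \<phi> \<tau> z (x, y) = -\<infinity>"
  by (simp add: Phi_def phi_MInf)

lemma Dom_nonempty:
  obtains x0 y0 where "x0 \<in> DX \<phi>" "y0 \<in> DY \<phi>"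
  using proper unfolding proper_sp_def Dom_def by blast

lemma lsc_phi: "y \<in> DY \<phi> \<Longrightarrow> lsc (\<lambda>x. \<phi> (x, y))"
  using closed unfolding closed_sp_def by blast

lemma convex_curve:
  assumes x0: "x0 \<in> DX \<phi>" and x1: "x1 \<in> DX \<phi>" and \<tau>: "\<tau> \<in> adm_tau l"
  obtains \<gamma> where "continuous_on {0..1} \<gamma>" "\<gamma> 0 = x0" "\<gamma> 1 = x1"
    "\<And>t. t \<in> {0..1} \<Longrightarrow> \<gamma> t \<in> DX \<phi>"
    "\<And>t y. t \<in> {0..1} \<Longrightarrow> y \<in> DY \<phi> \<Longrightarrow> F \<tau> z (\<gamma> t) y
      \<le> (1 - t) * F \<tau> z x0 y + t * F \<tau> z x1 y - (1 / \<tau> + l) / 2 * t * (1 - t) * (dist x0 x1)\<^sup>2"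
proof -
  obtain y0 where y0: "y0 \<in> DY \<phi>" using Dom_nonempty by blast
  then have "(x0, y0) \<in> Dom \<phi>" "(x1, y0) \<in> Dom \<phi>" using x0 x1 by (auto simp: Dom_def)
  from A2[unfolded A2_def, rule_format, OF this, of z] obtain \<gamma> \<sigma>
    where \<gamma>: "continuous_on {0..1} \<gamma>" "\<gamma> 0 = x0" "\<gamma> 1 = x1"
    and "\<forall>\<tau>\<in>adm_tau l. convex_concave_along (Phi \<phi> \<tau> z) (1 / \<tau> + l) \<gamma> \<sigma>" by blast
  with \<tau> have cc: "convex_concave_along (Phi \<phi> \<tau> z) (1 / \<tau> + l) \<gamma> \<sigma>" by blast
  have ineq: "Phi \<phi> \<tau> z (\<gamma> t, y) \<le> ereal ((1 - t) * F \<tau> z x0 y + t * F \<tau> z x1 y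
      - (1 / \<tau> + l) / 2 * t * (1 - t) * (dist x0 x1)\<^sup>2)" if "t \<in> {0..1}" "y \<in> DY \<phi>" for t y
  proof -
    have "Phi \<phi> \<tau> z (\<gamma> t, y) \<le> ereal (1 - t) * Phi \<phi> \<tau> z (\<gamma> 0, y) + ereal t * Phi \<phi> \<tau> z (\<gamma> 1, y)
        - ereal ((1 / \<tau> + l) / 2 * t * (1 - t) * (dist (\<gamma> 0) (\<gamma> 1))\<^sup>2)"
      using cc that(1) unfolding convex_concave_along_def by blast
    then show ?thesis using \<gamma> x0 x1 that(2) by (simp add: Phi_eq_F)
  qed
  have in_DX: "\<gamma> t \<in> DX \<phi>" if "t \<in> {0..1}" for t
  proof (rule ccontr)
    assume "\<gamma> t \<notin> DX \<phi>"
    then show False using ineq[OF that y0] Phi_PInf[OF _ y0] by simp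
  qed
  show thesis
    using that[OF \<gamma> in_DX] ineq by (simp add: Phi_eq_F in_DX)
qed

lemma concave_curve:
  assumes y0: "y0 \<in> DY \<phi>" and y1: "y1 \<in> DY \<phi>" and \<tau>: "\<tau> \<in> adm_tau l"
  obtains \<sigma> where "continuous_on {0..1} \<sigma>" "\<sigma> 0 = y0" "\<sigma> 1 = y1"
    "\<And>t. t \<in> {0..1} \<Longrightarrow> \<sigma> t \<in> DY \<phi>"
    "\<And>t x. t \<in> {0..1} \<Longrightarrow> x \<in> DX \<phi> \<Longrightarrow> (1 - t) * F \<tau> z x y0 + t * F \<tau> z x y1
      + (1 / \<tau> + l) / 2 * t * (1 - t) * (dist y0 y1)\<^sup>2 \<le> F \<tau> z x (\<sigma> t)"
proof -
  interpret dual: saddle_function "swap_neg \<phi>" l by (rule saddle_function_swap_neg)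
  obtain \<sigma> where "continuous_on {0..1} \<sigma>" "\<sigma> 0 = y0" "\<sigma> 1 = y1" "\<And>t. t \<in> {0..1} \<Longrightarrow> \<sigma> t \<in> DY \<phi>"
    and ineq: "\<And>t x. t \<in> {0..1} \<Longrightarrow> x \<in> DX \<phi> \<Longrightarrow> - F \<tau> z x (\<sigma> t)
      \<le> (1 - t) * - F \<tau> z x y0 + t * - F \<tau> z x y1 - (1 / \<tau> + l) / 2 * t * (1 - t) * (dist y0 y1)\<^sup>2"
    using dual.convex_curve[of y0 y1 \<tau> "prod.swap z"] y0 y1 \<tau> by (auto simp: F_swap_neg)
  moreover have "(1 - t) * F \<tau> z x y0 + t * F \<tau> z x y1
      + (1 / \<tau> + l) / 2 * t * (1 - t) * (dist y0 y1)\<^sup>2 \<le> F \<tau> z x (\<sigma> t)"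
    if "t \<in> {0..1}" "x \<in> DX \<phi>" for t x
    using ineq[OF that] by (simp add: mult_minus_right)
  ultimately show thesis using that by blast
qed

lemma F_growth_at_min:
  assumes \<tau>: "\<tau> \<in> adm_tau l" and y: "y \<in> DY \<phi>" and xs: "xs \<in> DX \<phi>" and x: "x \<in> DX \<phi>"
    and min: "\<And>x. x \<in> DX \<phi> \<Longrightarrow> F \<tau> z xs y \<le> F \<tau> z x y"
  shows "F \<tau> z xs y + (1 / \<tau> + l) / 2 * (dist x xs)\<^sup>2 \<le> F \<tau> z x y"
proof -
  obtain \<gamma> where \<gamma>: "\<And>t. t \<in> {0..1} \<Longrightarrow> \<gamma> t \<in> DX \<phi>"
    and conv: "\<And>t. t \<in> {0..1} \<Longrightarrow> F \<tau> z (\<gamma> t) y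
      \<le> (1 - t) * F \<tau> z xs y + t * F \<tau> z x y - (1 / \<tau> + l) / 2 * t * (1 - t) * (dist x xs)\<^sup>2"
    by (rule convex_curve[OF xs x \<tau>, of z]) (use y in \<open>auto simp: dist_commute\<close>)
  show ?thesis
  proof (rule le_of_le_add_scaled)
    fix t :: real assume t: "0 < t" "t \<le> 1"
    then have "F \<tau> z xs y \<le> (1 - t) * F \<tau> z xs y + t * F \<tau> z x y
        - (1 / \<tau> + l) / 2 * t * (1 - t) * (dist x xs)\<^sup>2"
      using min[OF \<gamma>] conv by (meson atLeastAtMost_iff less_imp_le order_trans)
    then show "F \<tau> z xs y + (1 / \<tau> + l) / 2 * (dist x xs)\<^sup>2
        \<le> F \<tau> z x y + t * ((1 / \<tau> + l) / 2 * (dist x xs)\<^sup>2)"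
      by (rule le_of_le_convex_comb[OF t(1)])
  qed
qed

lemma F_growth_at_max:
  assumes \<tau>: "\<tau> \<in> adm_tau l" and x: "x \<in> DX \<phi>" and ys: "ys \<in> DY \<phi>" and y: "y \<in> DY \<phi>"
    and max: "\<And>y. y \<in> DY \<phi> \<Longrightarrow> F \<tau> z x y \<le> F \<tau> z x ys"
  shows "F \<tau> z x y + (1 / \<tau> + l) / 2 * (dist y ys)\<^sup>2 \<le> F \<tau> z x ys"
proof -
  interpret dual: saddle_function "swap_neg \<phi>" l by (rule saddle_function_swap_neg)
  show ?thesis
    using dual.F_growth_at_min[of \<tau> x ys y "prod.swap z"] assms by (simp add: F_swap_neg)
qed

lemma F_le_of_tendsto:
  assumes y: "y \<in> DY \<phi>" and X: "\<And>n. X n \<in> DX \<phi>" and lim: "X \<longlonglongrightarrow> x" "e \<longlonglongrightarrow> 0"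
    and le: "\<And>n. F \<tau> z (X n) y \<le> s + e n"
  shows "x \<in> DX \<phi> \<and> F \<tau> z x y \<le> s"
proof -
  define q where "q u = (dist u (fst z))\<^sup>2 / (2 * \<tau>) - (dist y (snd z))\<^sup>2 / (2 * \<tau>)" for u
  have "(\<lambda>n. (dist (X n) (fst z))\<^sup>2) \<longlonglongrightarrow> (dist x (fst z))\<^sup>2"
    by (intro tendsto_intros lim)
  then have "(\<lambda>n. q (X n)) \<longlonglongrightarrow> q x"
    unfolding q_def
    by (intro tendsto_diff tendsto_const) (use tendsto_mult_right[of _ _ _ "1 / (2 * \<tau>)"] in simp)
  then have "(\<lambda>n. s + e n - q (X n)) \<longlonglongrightarrow> s + 0 - q x"
    by (intro tendsto_intros lim)
  moreover have "\<phi> (X n, y) \<le> ereal (s + e n - q (X n))" for n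
    using le[of n] phi_eq_f[OF X y] by (simp add: F_def q_def)
  ultimately have le_lim: "\<phi> (x, y) \<le> ereal (s - q x)"
    using lsc_le_of_tendsto[OF lsc_phi[OF y] lim(1)] by simp
  have "x \<in> DX \<phi>"
  proof (rule ccontr)
    assume "x \<notin> DX \<phi>"
    then show False using le_lim phi_PInf[OF _ y] by simp
  qed
  with le_lim y show ?thesis by (simp add: phi_eq_f F_def q_def)
qed

lemma F_ge_of_tendsto:
  assumes x: "x \<in> DX \<phi>" and Y: "\<And>n. Y n \<in> DY \<phi>" and lim: "Y \<longlonglongrightarrow> y" "e \<longlonglongrightarrow> 0"
    and ge: "\<And>n. s - e n \<le> F \<tau> z x (Y n)"
  shows "y \<in> DY \<phi> \<and> s \<le> F \<tau> z x y"
proof -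
  interpret dual: saddle_function "swap_neg \<phi>" l by (rule saddle_function_swap_neg)
  have "- F \<tau> z x (Y n) \<le> - s + e n" for n using ge[of n] by simp
  then show ?thesis
    using dual.F_le_of_tendsto[of x Y y e \<tau> "prod.swap z" "- s"] assms by (simp add: F_swap_neg)
qed

text \<open>Far from \<open>x1\<close>, convexity along a curve from \<open>x1\<close> is used where the curve crosses the sphere
  of radius \<open>r/2\<close>; for \<open>\<tau> \<le> r\<^sup>2/8\<close> the penalty there exceeds the drop of \<open>1\<close> allowed by
  lower semicontinuity.\<close>
lemma f_lower_bound_near:
  assumes y: "y \<in> DY \<phi>" and x1: "x1 \<in> DX \<phi>"
  obtains B c where "0 \<le> B" "\<And>x. x \<in> DX \<phi> \<Longrightarrow> c - B * (dist x x1)\<^sup>2 \<le> f x y"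
proof -
  define v where "v = f x1 y"
  have "ereal (v - 1) < \<phi> (x1, y)" using phi_eq_f[OF x1 y] by (simp add: v_def)
  from lsc_eventually_greater[OF lsc_phi[OF y] this] obtain r
    where r: "0 < r" "\<And>u. dist u x1 < r \<Longrightarrow> ereal (v - 1) < \<phi> (u, y)"
    unfolding eventually_nhds_metric by (auto simp: dist_commute)
  obtain \<tau> where \<tau>: "\<tau> \<in> adm_tau l" and \<tau>0: "0 < \<tau>" and "\<tau> \<le> r\<^sup>2 / 8"
    using adm_tau_below[of "r\<^sup>2 / 8"] r(1) by auto
  then have jump: "1 \<le> (r / 2)\<^sup>2 / (2 * \<tau>)" using \<tau>0 by (simp add: field_simps power2_eq_square)
  have F_x1: "F \<tau> (x1, y) u y = f u y + (dist u x1)\<^sup>2 / (2 * \<tau>)" for u by (simp add: F_def)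
  have "v - 1 - 1 / (2 * \<tau>) * (dist x x1)\<^sup>2 \<le> f x y" if x: "x \<in> DX \<phi>" for x
  proof (cases "dist x x1 < r")
    case True
    moreover have "0 \<le> (dist x x1)\<^sup>2 / (2 * \<tau>)" using \<tau>0 by simp
    ultimately show ?thesis using r(2)[OF True] phi_eq_f[OF x y] by simp
  next
    case False
    obtain \<gamma> where \<gamma>: "continuous_on {0..1} \<gamma>" "\<gamma> 0 = x1" "\<gamma> 1 = x" "\<And>t. t \<in> {0..1} \<Longrightarrow> \<gamma> t \<in> DX \<phi>"
      and conv: "\<And>t. t \<in> {0..1} \<Longrightarrow> F \<tau> (x1, y) (\<gamma> t) y
        \<le> (1 - t) * F \<tau> (x1, y) x1 y + t * F \<tau> (x1, y) x y - (1 / \<tau> + l) / 2 * t * (1 - t) * (dist x1 x)\<^sup>2"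
      by (rule convex_curve[OF x1 x \<tau>, of "(x1, y)"]) (use y in auto)
    obtain t where t: "0 < t" "t \<le> 1" "dist (\<gamma> t) x1 = r / 2"
      using curve_crosses_sphere[OF \<gamma>(1,2), of "r / 2"] False \<gamma>(3) r(1) by auto
    have "v - 1 < f (\<gamma> t) y" using r(2)[of "\<gamma> t"] t(3) r(1) phi_eq_f[OF \<gamma>(4) y] t by simp
    then have "v < F \<tau> (x1, y) (\<gamma> t) y" unfolding F_x1 t(3) using jump by linarith
    also have "\<dots> \<le> (1 - t) * F \<tau> (x1, y) x1 y + t * F \<tau> (x1, y) x y"
    proof -
      have "0 \<le> (1 / \<tau> + l) / 2 * t * (1 - t) * (dist x1 x)\<^sup>2"
        using t adm_tau_modulus_pos[OF \<tau>] by simp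
      moreover have "t \<in> {0..1}" using t by simp
      ultimately show ?thesis using conv[of t] by linarith
    qed
    also have "F \<tau> (x1, y) x1 y = v" by (simp add: F_x1 v_def)
    finally have "t * v < t * F \<tau> (x1, y) x y" by (simp add: algebra_simps)
    then have "v < F \<tau> (x1, y) x y" using t(1) by simp
    then show ?thesis by (simp add: F_x1)
  qed
  with \<tau>0 show thesis using that[of "1 / (2 * \<tau>)" "v - 1"] by simp
qed

lemma f_quadratic_minorant:
  assumes y: "y \<in> DY \<phi>"
  obtains B where "0 \<le> B" "\<And>p. \<exists>c. \<forall>x\<in>DX \<phi>. c - B * (dist x p)\<^sup>2 \<le> f x y"
proof -
  obtain x1 where x1: "x1 \<in> DX \<phi>" using Dom_nonempty by blast
  obtain B c where B: "0 \<le> B" and near: "\<And>x. x \<in> DX \<phi> \<Longrightarrow> c - B * (dist x x1)\<^sup>2 \<le> f x y"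
    by (rule f_lower_bound_near[OF y x1]) blast
  have "c - 2 * B * (dist p x1)\<^sup>2 - 2 * B * (dist x p)\<^sup>2 \<le> f x y" if "x \<in> DX \<phi>" for x p
  proof -
    have "B * (dist x x1)\<^sup>2 \<le> B * (2 * (dist x p)\<^sup>2 + 2 * (dist p x1)\<^sup>2)"
      by (rule mult_left_mono[OF power2_dist_triangle B])
    then have "B * (dist x x1)\<^sup>2 \<le> 2 * B * (dist x p)\<^sup>2 + 2 * B * (dist p x1)\<^sup>2"
      by (simp add: distrib_left)
    then show ?thesis using near[OF that] by linarith
  qed
  then have "\<exists>c. \<forall>x\<in>DX \<phi>. c - 2 * B * (dist x p)\<^sup>2 \<le> f x y" for p by blast
  with B show thesis using that[of "2 * B"] by simp
qed

lemma F_quadratic_minorant: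
  assumes y: "y \<in> DY \<phi>" and \<tau>: "0 < \<tau>"
  obtains B where "0 \<le> B" "\<And>p. \<exists>c. \<forall>x\<in>DX \<phi>. c - B * (dist x p)\<^sup>2 \<le> F \<tau> z x y"
proof -
  obtain B where B: "0 \<le> B" and minor: "\<And>p. \<exists>c. \<forall>x\<in>DX \<phi>. c - B * (dist x p)\<^sup>2 \<le> f x y"
    by (rule f_quadratic_minorant[OF y]) blast
  have "\<exists>c. \<forall>x\<in>DX \<phi>. c - B * (dist x p)\<^sup>2 \<le> F \<tau> z x y" for p
  proof -
    obtain c where c: "\<forall>x\<in>DX \<phi>. c - B * (dist x p)\<^sup>2 \<le> f x y" using minor by blast
    have "c - (dist y (snd z))\<^sup>2 / (2 * \<tau>) - B * (dist x p)\<^sup>2 \<le> F \<tau> z x y" if "x \<in> DX \<phi>" for x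
    proof -
      have "0 \<le> (dist x (fst z))\<^sup>2 / (2 * \<tau>)" using \<tau> by simp
      then show ?thesis using c that by (fastforce simp: F_def)
    qed
    then show ?thesis by blast
  qed
  with B show thesis using that by blast
qed

lemma f_quadratic_majorant:
  assumes x: "x \<in> DX \<phi>"
  obtains B where "0 \<le> B" "\<And>p. \<exists>c. \<forall>y\<in>DY \<phi>. f x y \<le> c + B * (dist y p)\<^sup>2"
proof -
  interpret dual: saddle_function "swap_neg \<phi>" l by (rule saddle_function_swap_neg)
  have "x \<in> DY (swap_neg \<phi>)" using x by simp
  then obtain B where B: "0 \<le> B"
    and bound: "\<And>p. \<exists>c. \<forall>y\<in>DX (swap_neg \<phi>). c - B * (dist y p)\<^sup>2 \<le> dual.f y x"
    by (rule dual.f_quadratic_minorant) blast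
  show thesis
  proof (rule that[OF B])
    fix p
    obtain c where c: "\<forall>y\<in>DY \<phi>. c - B * (dist y p)\<^sup>2 \<le> - f x y"
      using bound[of p] by (auto simp: f_swap_neg)
    have "f x y \<le> - c + B * (dist y p)\<^sup>2" if "y \<in> DY \<phi>" for y
      using c that by fastforce
    then show "\<exists>c. \<forall>y\<in>DY \<phi>. f x y \<le> c + B * (dist y p)\<^sup>2" by blast
  qed
qed

lemma is_saddle_Phi_iff:
  "is_saddle (Phi \<phi> \<tau> z) (a, b) \<longleftrightarrow> a \<in> DX \<phi> \<and> b \<in> DY \<phi> \<and>
     (\<forall>y\<in>DY \<phi>. F \<tau> z a y \<le> F \<tau> z a b) \<and> (\<forall>x\<in>DX \<phi>. F \<tau> z a b \<le> F \<tau> z x b)"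
    (is "?saddle \<longleftrightarrow> ?F_saddle")
proof
  assume sd: ?saddle
  then have le: "Phi \<phi> \<tau> z (a, y) \<le> Phi \<phi> \<tau> z (a, b)" "Phi \<phi> \<tau> z (a, b) \<le> Phi \<phi> \<tau> z (x, b)" for x y
    unfolding is_saddle_def by auto
  obtain x0 y0 where x0: "x0 \<in> DX \<phi>" and y0: "y0 \<in> DY \<phi>" by (rule Dom_nonempty)
  have a: "a \<in> DX \<phi>"
  proof (rule ccontr)
    assume a: "a \<notin> DX \<phi>"
    show False
    proof (cases "b \<in> DY \<phi>")
      case True
      then show False using le(2)[of x0] Phi_PInf[OF a True] Phi_eq_F[OF x0 True] by simp
    next
      case False
      then show False using le(1)[of y0] le(2)[of x0] Phi_PInf[OF a y0] Phi_MInf[OF x0 False] by simp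
    qed
  qed
  have b: "b \<in> DY \<phi>"
  proof (rule ccontr)
    assume "b \<notin> DY \<phi>"
    then show False using le(1)[of y0] Phi_MInf[OF a] Phi_eq_F[OF a y0] by simp
  qed
  have "F \<tau> z a y \<le> F \<tau> z a b" if "y \<in> DY \<phi>" for y
    using le(1)[of y] by (simp add: Phi_eq_F a b that)
  moreover have "F \<tau> z a b \<le> F \<tau> z x b" if "x \<in> DX \<phi>" for x
    using le(2)[of x] by (simp add: Phi_eq_F a b that)
  ultimately show ?F_saddle using a b by blast
next
  assume F_saddle: ?F_saddle
  have "Phi \<phi> \<tau> z (a, y) \<le> Phi \<phi> \<tau> z (a, b)" for y
    by (cases "y \<in> DY \<phi>") (use F_saddle in \<open>simp_all add: Phi_eq_F Phi_MInf\<close>)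
  moreover have "Phi \<phi> \<tau> z (a, b) \<le> Phi \<phi> \<tau> z (x, b)" for x
    by (cases "x \<in> DX \<phi>") (use F_saddle in \<open>simp_all add: Phi_eq_F Phi_PInf\<close>)
  ultimately show ?saddle unfolding is_saddle_def by simp
qed

lemma saddle_unique:
  assumes \<tau>: "\<tau> \<in> adm_tau l" and "is_saddle (Phi \<phi> \<tau> z) p" and "is_saddle (Phi \<phi> \<tau> z) q"
  shows "p = q"
proof -
  obtain a b c d where pq: "p = (a, b)" "q = (c, d)" by (cases p, cases q)
  note P = assms(2)[unfolded pq is_saddle_Phi_iff] and Q = assms(3)[unfolded pq is_saddle_Phi_iff]
  have cycle: "F \<tau> z c b \<le> F \<tau> z c d" "F \<tau> z c d \<le> F \<tau> z a d"
    "F \<tau> z a d \<le> F \<tau> z a b" "F \<tau> z a b \<le> F \<tau> z c b"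
    using P Q by auto
  let ?m = "(1 / \<tau> + l) / 2"
  have "?m > 0" using adm_tau_modulus_pos[OF \<tau>] by simp
  moreover have "F \<tau> z a b + ?m * (dist c a)\<^sup>2 \<le> F \<tau> z c b"
    using P Q by (intro F_growth_at_min[OF \<tau>]) auto
  moreover have "F \<tau> z a d + ?m * (dist d b)\<^sup>2 \<le> F \<tau> z a b"
    using P Q by (intro F_growth_at_max[OF \<tau>]) auto
  ultimately have "?m * (dist c a)\<^sup>2 \<le> 0" "?m * (dist d b)\<^sup>2 \<le> 0" using cycle by linarith+
  with \<open>?m > 0\<close> show ?thesis by (simp add: mult_le_0_iff pq)
qed

lemma J_is_saddle:
  assumes "\<tau> \<in> adm_tau l" and "is_saddle (Phi \<phi> \<tau> z) p"
  shows "J \<phi> \<tau> z = p"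
  unfolding J_def using assms saddle_unique by (intro the_equality) auto

lemma near_minimizers_close:
  assumes \<tau>: "\<tau> \<in> adm_tau l" and y: "y \<in> DY \<phi>"
    and lower: "\<And>x. x \<in> DX \<phi> \<Longrightarrow> s \<le> F \<tau> z x y"
    and a: "a \<in> DX \<phi>" "F \<tau> z a y < s + ea" and b: "b \<in> DX \<phi>" "F \<tau> z b y < s + eb"
  shows "(1 / \<tau> + l) / 8 * (dist a b)\<^sup>2 \<le> (ea + eb) / 2"
proof -
  define D where "D = (1 / \<tau> + l) / 8 * (dist a b)\<^sup>2"
  have half: "(1 / 2 :: real) \<in> {0..1}" by simp
  obtain \<gamma> :: "real \<Rightarrow> 'a" where "\<gamma> (1 / 2) \<in> DX \<phi>" and "F \<tau> z (\<gamma> (1 / 2)) y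
      \<le> (1 - 1 / 2) * F \<tau> z a y + 1 / 2 * F \<tau> z b y - (1 / \<tau> + l) / 2 * (1 / 2) * (1 - 1 / 2) * (dist a b)\<^sup>2"
    using convex_curve[OF a(1) b(1) \<tau>, of z] half y by metis
  then have "s \<le> F \<tau> z a y / 2 + F \<tau> z b y / 2 - D"
    using lower by (fastforce simp: D_def)
  with a b show ?thesis unfolding D_def[symmetric] by argo
qed

lemma near_maximizers_close:
  assumes \<tau>: "\<tau> \<in> adm_tau l"
    and approx: "\<And>y \<delta>. y \<in> DY \<phi> \<Longrightarrow> 0 < \<delta> \<Longrightarrow> \<exists>x\<in>DX \<phi>. F \<tau> z x y < s + \<delta>"
    and a: "a \<in> DY \<phi>" "\<And>x. x \<in> DX \<phi> \<Longrightarrow> s - ea < F \<tau> z x a"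
    and b: "b \<in> DY \<phi>" "\<And>x. x \<in> DX \<phi> \<Longrightarrow> s - eb < F \<tau> z x b"
  shows "(1 / \<tau> + l) / 8 * (dist a b)\<^sup>2 \<le> (ea + eb) / 2"
proof -
  define D where "D = (1 / \<tau> + l) / 8 * (dist a b)\<^sup>2"
  have half: "(1 / 2 :: real) \<in> {0..1}" by simp
  obtain \<sigma> :: "real \<Rightarrow> 'b" where "\<sigma> (1 / 2) \<in> DY \<phi>" and mid: "\<And>x. x \<in> DX \<phi> \<Longrightarrow> (1 - 1 / 2) * F \<tau> z x a
      + 1 / 2 * F \<tau> z x b + (1 / \<tau> + l) / 2 * (1 / 2) * (1 - 1 / 2) * (dist a b)\<^sup>2 \<le> F \<tau> z x (\<sigma> (1 / 2))"
    using concave_curve[OF a(1) b(1) \<tau>, of z] half by metis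
  have "D \<le> (ea + eb) / 2 + \<delta>" if "0 < \<delta>" for \<delta>
  proof -
    from approx[OF \<open>\<sigma> (1 / 2) \<in> DY \<phi>\<close> that] obtain x
      where x: "x \<in> DX \<phi>" and "F \<tau> z x (\<sigma> (1 / 2)) < s + \<delta>" by blast
    moreover have "F \<tau> z x a / 2 + F \<tau> z x b / 2 + D \<le> F \<tau> z x (\<sigma> (1 / 2))"
      using mid[OF x] by (simp add: D_def)
    ultimately show ?thesis using a(2)[OF x] b(2)[OF x] by argo
  qed
  then show ?thesis unfolding D_def[symmetric] by (rule field_le_epsilon)
qed

lemma F_attains_inf:
  assumes \<tau>: "\<tau> \<in> adm_tau l" and y: "y \<in> DY \<phi>"
    and lower: "\<And>x. x \<in> DX \<phi> \<Longrightarrow> s \<le> F \<tau> z x y"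
    and approx: "\<And>\<delta>. 0 < \<delta> \<Longrightarrow> \<exists>x\<in>DX \<phi>. F \<tau> z x y < s + \<delta>"
  obtains xs where "xs \<in> DX \<phi>" "F \<tau> z xs y = s"
proof -
  define m where "m = 1 / \<tau> + l"
  have m: "0 < m" using adm_tau_modulus_pos[OF \<tau>] by (simp add: m_def)
  obtain \<epsilon> :: "nat \<Rightarrow> real" where \<epsilon>: "\<And>n. 0 < \<epsilon> n" "\<And>n. \<epsilon> n \<le> 1" and \<epsilon>_lim: "\<epsilon> \<longlonglongrightarrow> 0"
    by (rule null_sequence_below[OF zero_less_one]) blast
  obtain X where X: "\<And>n. X n \<in> DX \<phi>" and X_lt: "\<And>n. F \<tau> z (X n) y < s + \<epsilon> n"
    using approx[OF \<epsilon>(1)] by metis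
  have "(dist (X a) (X b))\<^sup>2 \<le> 4 / m * \<epsilon> a + 4 / m * \<epsilon> b" for a b
  proof -
    have "m / 8 * (dist (X a) (X b))\<^sup>2 \<le> (\<epsilon> a + \<epsilon> b) / 2"
      using near_minimizers_close[OF \<tau> y lower X X_lt X X_lt, of a b] by (simp add: m_def)
    then show ?thesis using m by (simp add: field_simps)
  qed
  moreover have "(\<lambda>n. 4 / m * \<epsilon> n) \<longlonglongrightarrow> 0" by (rule tendsto_mult_right_zero[OF \<epsilon>_lim])
  ultimately have "Cauchy X" by (rule Cauchy_of_power2_dist_le)
  then obtain xs where lim: "X \<longlonglongrightarrow> xs" using Cauchy_convergent convergent_def by blast
  have "xs \<in> DX \<phi> \<and> F \<tau> z xs y \<le> s"
    using X_lt less_imp_le by (intro F_le_of_tendsto[OF y X lim \<epsilon>_lim]) blast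
  with lower show thesis using that by fastforce
qed

lemma inf_F_attains_sup:
  assumes \<tau>: "\<tau> \<in> adm_tau l"
    and approx: "\<And>y \<delta>. y \<in> DY \<phi> \<Longrightarrow> 0 < \<delta> \<Longrightarrow> \<exists>x\<in>DX \<phi>. F \<tau> z x y < s + \<delta>"
    and sup: "\<And>\<epsilon>. 0 < \<epsilon> \<Longrightarrow> \<exists>y\<in>DY \<phi>. \<forall>x\<in>DX \<phi>. s - \<epsilon> < F \<tau> z x y"
  obtains ys where "ys \<in> DY \<phi>" "\<And>x. x \<in> DX \<phi> \<Longrightarrow> s \<le> F \<tau> z x ys"
proof -
  define m where "m = 1 / \<tau> + l"
  have m: "0 < m" using adm_tau_modulus_pos[OF \<tau>] by (simp add: m_def)
  obtain \<epsilon> :: "nat \<Rightarrow> real" where \<epsilon>: "\<And>n. 0 < \<epsilon> n" "\<And>n. \<epsilon> n \<le> 1" and \<epsilon>_lim: "\<epsilon> \<longlonglongrightarrow> 0"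
    by (rule null_sequence_below[OF zero_less_one]) blast
  obtain Y where Y: "\<And>n. Y n \<in> DY \<phi>" and Y_gt: "\<And>n x. x \<in> DX \<phi> \<Longrightarrow> s - \<epsilon> n < F \<tau> z x (Y n)"
    using sup[OF \<epsilon>(1)] by metis
  have "(dist (Y a) (Y b))\<^sup>2 \<le> 4 / m * \<epsilon> a + 4 / m * \<epsilon> b" for a b
  proof -
    have "m / 8 * (dist (Y a) (Y b))\<^sup>2 \<le> (\<epsilon> a + \<epsilon> b) / 2"
      using near_maximizers_close[OF \<tau> approx Y Y_gt Y Y_gt, of a b] by (simp add: m_def)
    then show ?thesis using m by (simp add: field_simps)
  qed
  moreover have "(\<lambda>n. 4 / m * \<epsilon> n) \<longlonglongrightarrow> 0" by (rule tendsto_mult_right_zero[OF \<epsilon>_lim])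
  ultimately have "Cauchy Y" by (rule Cauchy_of_power2_dist_le)
  then obtain ys where lim: "Y \<longlonglongrightarrow> ys" using Cauchy_convergent convergent_def by blast
  have ys: "ys \<in> DY \<phi> \<and> s \<le> F \<tau> z x ys" if "x \<in> DX \<phi>" for x
    using Y_gt[OF that] less_imp_le by (intro F_ge_of_tendsto[OF that Y lim \<epsilon>_lim]) blast
  obtain x0 where "x0 \<in> DX \<phi>" using Dom_nonempty by blast
  with ys show thesis using that by blast
qed

text \<open>Move \<open>ys\<close> towards \<open>y\<close> along the concave curve \<open>\<sigma>\<close>: near-minimizers of \<open>F \<tau> z \<cdot> (\<sigma> t)\<close>
  satisfy \<open>F \<tau> z x y < s + t\<close> and, by the growth at \<open>xs\<close> against the quadratic minorant,
  converge to \<open>xs\<close> as \<open>t \<rightarrow> 0\<close>.\<close>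
lemma F_le_at_minimizer:
  assumes \<tau>: "\<tau> \<in> adm_tau l"
    and approx: "\<And>y \<delta>. y \<in> DY \<phi> \<Longrightarrow> 0 < \<delta> \<Longrightarrow> \<exists>x\<in>DX \<phi>. F \<tau> z x y < s + \<delta>"
    and xs: "xs \<in> DX \<phi>" and ys: "ys \<in> DY \<phi>" and y: "y \<in> DY \<phi>"
    and growth: "\<And>x. x \<in> DX \<phi> \<Longrightarrow> s + (1 / \<tau> + l) / 2 * (dist x xs)\<^sup>2 \<le> F \<tau> z x ys"
  shows "F \<tau> z xs y \<le> s"
proof -
  define m where "m = (1 / \<tau> + l) / 2"
  have m: "0 < m" using adm_tau_modulus_pos[OF \<tau>] by (simp add: m_def)
  obtain \<sigma> where \<sigma>: "\<And>t. t \<in> {0..1} \<Longrightarrow> \<sigma> t \<in> DY \<phi>"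
    and conc: "\<And>t x. t \<in> {0..1} \<Longrightarrow> x \<in> DX \<phi> \<Longrightarrow> (1 - t) * F \<tau> z x ys + t * F \<tau> z x y
      + m * t * (1 - t) * (dist ys y)\<^sup>2 \<le> F \<tau> z x (\<sigma> t)"
    unfolding m_def by (rule concave_curve[OF ys y \<tau>, of z]) blast
  obtain B where B: "0 \<le> B" and "\<And>p. \<exists>c. \<forall>x\<in>DX \<phi>. c - B * (dist x p)\<^sup>2 \<le> F \<tau> z x y"
    by (rule F_quadratic_minorant[OF y adm_tau_pos[OF \<tau>]]) blast
  then obtain c where lower: "\<And>x. x \<in> DX \<phi> \<Longrightarrow> c - B * (dist x xs)\<^sup>2 \<le> F \<tau> z x y" by blast
  have "0 < min 1 (m / (2 * (m + B)))" using m B by simp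
  then obtain T :: "nat \<Rightarrow> real" where "\<And>n. 0 < T n" "\<And>n. T n \<le> min 1 (m / (2 * (m + B)))"
    and T_lim: "T \<longlonglongrightarrow> 0"
    by (rule null_sequence_below) blast
  then have T: "0 < T n" "T n \<le> 1" "T n \<le> m / (2 * (m + B))" for n by auto
  have "\<exists>x. x \<in> DX \<phi> \<and> F \<tau> z x (\<sigma> (T n)) < s + (T n)\<^sup>2" for n
    using approx[OF \<sigma>, of "T n" "(T n)\<^sup>2"] T[of n] by auto
  then obtain X where X: "\<And>n. X n \<in> DX \<phi>" and X_lt: "\<And>n. F \<tau> z (X n) (\<sigma> (T n)) < s + (T n)\<^sup>2"
    by metis
  have bounds: "F \<tau> z (X n) y < s + T n \<and> m / 2 * (dist (X n) xs)\<^sup>2 \<le> T n * (\<bar>s - c\<bar> + 1)" for n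
  proof -
    have t: "T n \<in> {0..1}" using T[of n] by simp
    have "0 \<le> m * T n * (1 - T n) * (dist ys y)\<^sup>2" using m T[of n] by simp
    then have "(1 - T n) * F \<tau> z (X n) ys + T n * F \<tau> z (X n) y \<le> F \<tau> z (X n) (\<sigma> (T n))"
      using conc[OF t X[of n]] by linarith
    from concave_step_bound[OF T(1,2,3) zero_le_power2 m B this X_lt growth[OF X, folded m_def] lower[OF X]]
    show ?thesis by simp
  qed
  have lim: "X \<longlonglongrightarrow> xs"
  proof (rule LIMSEQ_of_power2_dist_le)
    show "(dist (X n) xs)\<^sup>2 \<le> 2 / m * (\<bar>s - c\<bar> + 1) * T n" for n
      using bounds[of n] m by (simp add: field_simps)
    show "(\<lambda>n. 2 / m * (\<bar>s - c\<bar> + 1) * T n) \<longlonglongrightarrow> 0"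
      by (rule tendsto_mult_right_zero[OF T_lim])
  qed
  have "F \<tau> z (X n) y \<le> s + T n" for n using bounds[of n] by simp
  then show ?thesis using F_le_of_tendsto[OF y X lim T_lim] by simp
qed

lemma saddle_exists_of_value:
  assumes \<tau>: "\<tau> \<in> adm_tau l"
    and approx: "\<And>y \<delta>. y \<in> DY \<phi> \<Longrightarrow> 0 < \<delta> \<Longrightarrow> \<exists>x\<in>DX \<phi>. F \<tau> z x y < s + \<delta>"
    and sup: "\<And>\<epsilon>. 0 < \<epsilon> \<Longrightarrow> \<exists>y\<in>DY \<phi>. \<forall>x\<in>DX \<phi>. s - \<epsilon> < F \<tau> z x y"
  shows "\<exists>p. is_saddle (Phi \<phi> \<tau> z) p"
proof -
  obtain ys where ys: "ys \<in> DY \<phi>" and ge: "\<And>x. x \<in> DX \<phi> \<Longrightarrow> s \<le> F \<tau> z x ys"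
    using inf_F_attains_sup[OF \<tau> approx sup] by blast
  obtain xs where xs: "xs \<in> DX \<phi>" and eq: "F \<tau> z xs ys = s"
    using F_attains_inf[OF \<tau> ys ge approx[OF ys]] by blast
  have min: "F \<tau> z xs ys \<le> F \<tau> z x ys" if "x \<in> DX \<phi>" for x using ge[OF that] eq by simp
  have "s + (1 / \<tau> + l) / 2 * (dist x xs)\<^sup>2 \<le> F \<tau> z x ys" if "x \<in> DX \<phi>" for x
    using F_growth_at_min[OF \<tau> ys xs that min] eq by simp
  then have "F \<tau> z xs y \<le> F \<tau> z xs ys" if "y \<in> DY \<phi>" for y
    using F_le_at_minimizer[OF \<tau> approx xs ys that] eq by simp
  with xs ys ge eq have "is_saddle (Phi \<phi> \<tau> z) (xs, ys)" by (simp add: is_saddle_Phi_iff)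
  then show ?thesis by blast
qed

text \<open>For \<open>\<tau> < \<tau>0\<close> the penalty \<open>1/(2\<tau>)\<close> dominates \<open>B1\<close> and \<open>B2\<close>, so \<open>F \<tau> z \<cdot> y0\<close> is bounded
  below, \<open>F \<tau> z x0 \<cdot>\<close> above, and the value \<open>sup inf\<close> is finite.\<close>
lemma saddle_exists:
  obtains \<tau>0 where "0 < \<tau>0"
    "\<And>\<tau> z. \<tau> \<in> adm_tau l \<Longrightarrow> \<tau> < \<tau>0 \<Longrightarrow> \<exists>p. is_saddle (Phi \<phi> \<tau> z) p"
proof -
  obtain x0 y0 where x0: "x0 \<in> DX \<phi>" and y0: "y0 \<in> DY \<phi>" by (rule Dom_nonempty)
  obtain B1 where B1: "0 \<le> B1" and minor: "\<And>p. \<exists>c. \<forall>x\<in>DX \<phi>. c - B1 * (dist x p)\<^sup>2 \<le> f x y0"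
    by (rule f_quadratic_minorant[OF y0]) blast
  obtain B2 where B2: "0 \<le> B2" and major: "\<And>p. \<exists>c. \<forall>y\<in>DY \<phi>. f x0 y \<le> c + B2 * (dist y p)\<^sup>2"
    by (rule f_quadratic_majorant[OF x0]) blast
  define \<tau>0 where "\<tau>0 = 1 / (2 * (B1 + B2 + 1))"
  have "\<exists>p. is_saddle (Phi \<phi> \<tau> z) p" if \<tau>: "\<tau> \<in> adm_tau l" and small: "\<tau> < \<tau>0" for \<tau> z
  proof -
    have "0 < \<tau>" using adm_tau_pos[OF \<tau>] .
    with small have "B1 * (2 * \<tau>) + B2 * (2 * \<tau>) + 2 * \<tau> < 1"
      using B1 B2 by (simp add: \<tau>0_def field_simps)
    moreover have "0 \<le> B1 * (2 * \<tau>)" "0 \<le> B2 * (2 * \<tau>)" using B1 B2 \<open>0 < \<tau>\<close> by simp_all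
    ultimately have "B1 * (2 * \<tau>) \<le> 1" "B2 * (2 * \<tau>) \<le> 1" using \<open>0 < \<tau>\<close> by linarith+
    with \<open>0 < \<tau>\<close> have B: "B1 \<le> 1 / (2 * \<tau>)" "B2 \<le> 1 / (2 * \<tau>)"
      by (simp_all add: pos_le_divide_eq)
    obtain c1 where c1: "\<And>x. x \<in> DX \<phi> \<Longrightarrow> c1 - B1 * (dist x (fst z))\<^sup>2 \<le> f x y0" using minor by blast
    obtain c2 where c2: "\<And>y. y \<in> DY \<phi> \<Longrightarrow> f x0 y \<le> c2 + B2 * (dist y (snd z))\<^sup>2" using major by blast
    have "c1 - (dist y0 (snd z))\<^sup>2 / (2 * \<tau>) \<le> F \<tau> z x y0" if "x \<in> DX \<phi>" for x
      using c1[OF that] mult_right_mono[OF B(1), of "(dist x (fst z))\<^sup>2"] by (simp add: F_def)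
    moreover have "F \<tau> z x0 y \<le> c2 + (dist x0 (fst z))\<^sup>2 / (2 * \<tau>)" if "y \<in> DY \<phi>" for y
      using c2[OF that] mult_right_mono[OF B(2), of "(dist y (snd z))\<^sup>2"] by (simp add: F_def)
    ultimately obtain s
      where "\<And>y \<delta>. y \<in> DY \<phi> \<Longrightarrow> 0 < \<delta> \<Longrightarrow> \<exists>x\<in>DX \<phi>. F \<tau> z x y < s + \<delta>"
        and "\<And>\<epsilon>. 0 < \<epsilon> \<Longrightarrow> \<exists>y\<in>DY \<phi>. \<forall>x\<in>DX \<phi>. s - \<epsilon> < F \<tau> z x y"
      using sup_inf_value[OF x0 y0, where g = "F \<tau> z"] by blast
    then show ?thesis by (rule saddle_exists_of_value[OF \<tau>])
  qed
  moreover have "0 < \<tau>0" using B1 B2 by (simp add: \<tau>0_def)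
  ultimately show thesis using that by blast
qed

lemma slope_saddle_finite:
  assumes \<tau>: "0 < \<tau>" and saddle: "is_saddle (Phi \<phi> \<tau> z) p"
  shows "slope \<phi> p < \<infinity>"
proof -
  obtain a b where p: "p = (a, b)" by (cases p)
  with saddle have a: "a \<in> DX \<phi>" and b: "b \<in> DY \<phi>"
    and P: "\<And>y. y \<in> DY \<phi> \<Longrightarrow> F \<tau> z a y \<le> F \<tau> z a b" "\<And>x. x \<in> DX \<phi> \<Longrightarrow> F \<tau> z a b \<le> F \<tau> z x b"
    by (auto simp: is_saddle_Phi_iff)
  then have pD: "p \<in> Dom \<phi>" by (simp add: p Dom_def)
  define K where "K = (2 * dist b (snd z) + 2 * dist a (fst z) + 2) / (2 * \<tau>)"
  let ?q = "\<lambda>z'. max (\<phi> (fst p, snd z') - \<phi> (fst z', snd p)) 0 / ereal (dist z' p)"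
  have "?q z' \<le> ereal K" if z': "z' \<in> Dom \<phi>" "z' \<noteq> p" "dist z' p < 1" for z'
  proof -
    obtain x' y' where zz: "z' = (x', y')" by (cases z')
    have x': "x' \<in> DX \<phi>" and y': "y' \<in> DY \<phi>" using z' zz by (auto simp: Dom_def)
    define \<delta> where "\<delta> = dist z' p"
    have \<delta>: "0 < \<delta>" "\<delta> \<le> 1" using z' by (auto simp: \<delta>_def)
    have "dist y' b \<le> \<delta>" "dist x' a \<le> \<delta>"
      using dist_snd_le[of z' p] dist_fst_le[of z' p] by (simp_all add: \<delta>_def zz p)
    moreover have "f a y' - f x' b \<le> (((dist y' (snd z))\<^sup>2 - (dist b (snd z))\<^sup>2)
        + ((dist x' (fst z))\<^sup>2 - (dist a (fst z))\<^sup>2)) / (2 * \<tau>)"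
      using P(1)[OF y'] P(2)[OF x'] unfolding F_def by (simp add: diff_divide_distrib add_divide_distrib)
    ultimately have "f a y' - f x' b \<le> \<delta> * K" unfolding K_def
      by (intro increment_bound[OF _ power2_dist_diff_le power2_dist_diff_le]) (use \<delta> \<tau> in auto)
    then have "max (f a y' - f x' b) 0 / \<delta> \<le> K"
      using \<delta> \<tau> by (simp add: K_def pos_divide_le_eq mult.commute)
    moreover have "?q z' = ereal (max (f a y' - f x' b) 0 / \<delta>)"
    proof -
      have "dist (x', y') (a, b) = \<delta>" by (simp add: \<delta>_def zz p)
      then show ?thesis using \<delta> by (simp add: p zz phi_eq_f a b x' y' max_def zero_ereal_def)
    qed
    ultimately show ?thesis by simp
  qed
  then have "eventually (\<lambda>z'. ?q z' \<le> ereal K) (at p within Dom \<phi>)"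
    unfolding eventually_at by (intro exI[of _ 1]) auto
  then have "Limsup (at p within Dom \<phi>) ?q \<le> ereal K" by (rule Limsup_bounded)
  then have "Limsup (at p within Dom \<phi>) ?q < \<infinity>" using le_less_trans by fastforce
  then show ?thesis using pD by (simp add: slope_def)
qed

lemma saddle_dist_estimate:
  assumes "p \<in> Dom \<phi>"
  obtains \<tau>1 C where "0 < \<tau>1"
    "\<And>\<tau> q. 0 < \<tau> \<Longrightarrow> \<tau> < \<tau>1 \<Longrightarrow> is_saddle (Phi \<phi> \<tau> z) q \<Longrightarrow> (dist q z)\<^sup>2 \<le> 2 * (dist p z)\<^sup>2 + \<tau> * C"
proof -
  obtain a b xz yz where p: "p = (a, b)" and z: "z = (xz, yz)" by (cases p, cases z)
  with assms have a: "a \<in> DX \<phi>" and b: "b \<in> DY \<phi>" by (auto simp: Dom_def)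
  obtain B1 where B1: "0 \<le> B1" and "\<And>p. \<exists>c. \<forall>x\<in>DX \<phi>. c - B1 * (dist x p)\<^sup>2 \<le> f x b"
    by (rule f_quadratic_minorant[OF b]) blast
  then obtain c1 where c1: "\<And>x. x \<in> DX \<phi> \<Longrightarrow> c1 - B1 * (dist x xz)\<^sup>2 \<le> f x b" by blast
  obtain B2 where B2: "0 \<le> B2" and "\<And>p. \<exists>c. \<forall>y\<in>DY \<phi>. f a y \<le> c + B2 * (dist y p)\<^sup>2"
    by (rule f_quadratic_majorant[OF a]) blast
  then obtain c2 where c2: "\<And>y. y \<in> DY \<phi> \<Longrightarrow> f a y \<le> c2 + B2 * (dist y yz)\<^sup>2" by blast
  define \<tau>1 where "\<tau>1 = 1 / (4 * (B1 + B2 + 1))"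
  have "(dist q z)\<^sup>2 \<le> 2 * (dist p z)\<^sup>2 + \<tau> * (4 * \<bar>c2 - c1\<bar>)"
    if \<tau>: "0 < \<tau>" "\<tau> < \<tau>1" and saddle: "is_saddle (Phi \<phi> \<tau> z) q" for \<tau> q
  proof -
    obtain xq yq where q: "q = (xq, yq)" by (cases q)
    define D where "D = (dist xq xz)\<^sup>2 + (dist yq yz)\<^sup>2"
    define R where "R = (dist a xz)\<^sup>2 + (dist b yz)\<^sup>2"
    from saddle q have xq: "xq \<in> DX \<phi>" and yq: "yq \<in> DY \<phi>"
      and "F \<tau> z xq b \<le> F \<tau> z xq yq" "F \<tau> z xq yq \<le> F \<tau> z a yq"
      using a b by (auto simp: is_saddle_Phi_iff)
    then have gap: "D / (2 * \<tau>) \<le> f a yq - f xq b + R / (2 * \<tau>)"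
      by (simp add: F_def z D_def R_def add_divide_distrib)
    have "4 * \<tau> * B1 \<le> 1" "4 * \<tau> * B2 \<le> 1"
      using \<tau> B1 B2 by (auto simp: \<tau>1_def field_simps intro: order_trans[of _ "4 * \<tau> * (B1 + B2 + 1)"])
    moreover have scale: "B * d \<le> d / (4 * \<tau>)" if "4 * \<tau> * B \<le> 1" "0 \<le> d" for B d :: real
      using mult_right_mono[OF that] \<tau>(1) by (simp add: pos_le_divide_eq mult_ac)
    ultimately have "B1 * (dist xq xz)\<^sup>2 \<le> (dist xq xz)\<^sup>2 / (4 * \<tau>)"
      "B2 * (dist yq yz)\<^sup>2 \<le> (dist yq yz)\<^sup>2 / (4 * \<tau>)" by simp_all
    with c1[OF xq] c2[OF yq] have "f a yq - f xq b \<le> (c2 - c1) + D / (4 * \<tau>)"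
      by (simp add: D_def add_divide_distrib)
    from quadratic_gap_bound[OF \<tau>(1) gap this] show ?thesis
      by (simp add: p q z dist_Pair_Pair D_def R_def)
  qed
  moreover have "0 < \<tau>1" using B1 B2 by (simp add: \<tau>1_def)
  ultimately show thesis using that[of \<tau>1 "4 * \<bar>c2 - c1\<bar>"] by blast
qed

lemma J_tendsto:
  assumes \<tau>0: "0 < \<tau>0"
    and exists: "\<And>\<tau> z. \<tau> \<in> adm_tau l \<Longrightarrow> \<tau> < \<tau>0 \<Longrightarrow> \<exists>p. is_saddle (Phi \<phi> \<tau> z) p"
    and z: "z \<in> closure (Dom \<phi>)"
  shows "((\<lambda>\<tau>. J \<phi> \<tau> z) \<longlongrightarrow> z) (at_right 0)"
proof (rule tendstoI)
  fix e :: real assume e: "0 < e"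
  then have "0 < e / 2" by simp
  then obtain p where p: "p \<in> Dom \<phi>" "dist p z < e / 2" using z unfolding closure_approachable by blast
  obtain \<tau>1 C where \<tau>1: "0 < \<tau>1" and estimate: "\<And>\<tau> q. 0 < \<tau> \<Longrightarrow> \<tau> < \<tau>1 \<Longrightarrow>
      is_saddle (Phi \<phi> \<tau> z) q \<Longrightarrow> (dist q z)\<^sup>2 \<le> 2 * (dist p z)\<^sup>2 + \<tau> * C"
    by (rule saddle_dist_estimate[OF p(1), where z = z]) blast
  have "((\<lambda>\<tau>. \<tau> * C) \<longlongrightarrow> 0 * C) (at_right 0)" by (intro tendsto_intros)
  moreover have "0 * C < e\<^sup>2 / 2" using e by simp
  ultimately have "eventually (\<lambda>\<tau>. \<tau> * C < e\<^sup>2 / 2) (at_right 0)" by (rule order_tendstoD(2))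
  moreover have "eventually (\<lambda>\<tau>. \<tau> \<in> adm_tau l \<and> \<tau> < min \<tau>0 \<tau>1) (at_right 0)"
    using \<tau>0 \<tau>1 by (intro eventually_adm_tau_at_right) simp
  ultimately show "eventually (\<lambda>\<tau>. dist (J \<phi> \<tau> z) z < e) (at_right 0)"
  proof eventually_elim
    case (elim \<tau>)
    then obtain q where q: "is_saddle (Phi \<phi> \<tau> z) q" using exists by (meson min_less_iff_conj)
    have "(dist p z)\<^sup>2 < (e / 2)\<^sup>2" using p(2) by (simp add: power_strict_mono)
    then have "(dist q z)\<^sup>2 < e\<^sup>2"
      using estimate[OF adm_tau_pos _ q, of l] elim by (simp add: power_divide)
    then show ?case using J_is_saddle[OF _ q] elim e by (simp add: power_less_imp_less_base)
  qed
qed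

lemma eventually_J_in_Dom_slope:
  assumes \<tau>0: "0 < \<tau>0"
    and exists: "\<And>\<tau> z. \<tau> \<in> adm_tau l \<Longrightarrow> \<tau> < \<tau>0 \<Longrightarrow> \<exists>p. is_saddle (Phi \<phi> \<tau> z) p"
  shows "eventually (\<lambda>\<tau>. J \<phi> \<tau> z \<in> Dom_slope \<phi>) (at_right 0)"
  using eventually_adm_tau_at_right[OF \<tau>0, of l]
proof eventually_elim
  case (elim \<tau>)
  then obtain p where p: "is_saddle (Phi \<phi> \<tau> z) p" using exists by blast
  then have "p \<in> Dom \<phi>" by (cases p) (simp add: is_saddle_Phi_iff Dom_def)
  moreover have "slope \<phi> p < \<infinity>" by (rule slope_saddle_finite[OF adm_tau_pos p]) (use elim in blast)
  ultimately show ?case using J_is_saddle[OF _ p] elim by (simp add: Dom_slope_def)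
qed

end

theorem mainTheorem13:
  fixes \<phi> :: "'a::complete_space \<times> 'b::complete_space \<Rightarrow> ereal" and l :: real
  assumes "proper_sp \<phi>" and "closed_sp \<phi>" and "A1 \<phi>" and "A2 \<phi> l"
  shows "(\<forall>z\<in>closure (Dom \<phi>). ((\<lambda>\<tau>. J \<phi> \<tau> z) \<longlongrightarrow> z) (at_right 0))
         \<and> closure (Dom \<phi>) = closure (Dom_slope \<phi>)"
proof -
  interpret saddle_function \<phi> l using assms by unfold_locales
  obtain \<tau>0 where \<tau>0: "0 < \<tau>0"
    and exists: "\<And>\<tau> z. \<tau> \<in> adm_tau l \<Longrightarrow> \<tau> < \<tau>0 \<Longrightarrow> \<exists>p. is_saddle (Phi \<phi> \<tau> z) p"
    by (rule saddle_exists) blast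
  note tendsto = J_tendsto[OF \<tau>0 exists]
  have "closure (Dom \<phi>) = closure (Dom_slope \<phi>)"
    by (rule closure_eq_closure_if_approximable[where g = "\<lambda>z \<tau>. J \<phi> \<tau> z"])
      (use tendsto closure_subset eventually_J_in_Dom_slope[OF \<tau>0 exists] in \<open>auto simp: Dom_slope_def\<close>)
  with tendsto show ?thesis by blast
qed

end
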